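(* Let $K\in\mathbb{N}^*$. For every $p\in\mathbb{N}^*$ there exist $C>0$ and a quadratic form $Q_p$ such that for every real-valued $\mu\in C_c^\infty(0,1)$, $$A^p_K(\mu)=\langle(\mu^{(2p-1)})^2\varphi_1,\varphi_K\rangle+Q_p(\mu),\qquad |Q_p(\mu)|\le C\|\mu\|^2_{H^{2p-2}(0,1)}.$$
   Context: $\varphi_j=\sqrt2\sin(j\pi x)$, $\lambda_j=(j\pi)^2$, $\langle f,g\rangle=\int_0^1f\bar g$, $c_j=\langle\mu\varphi_1,\varphi_j\rangle\langle\mu\varphi_K,\varphi_j\rangle$, and $A^p_K(\mu)=(-1)^{p-1}\sum_{j\ge1}(\lambda_j-\frac{\lambda_1+\lambda_K}2)(\lambda_K-\lambda_j)^{p-1}(\lambda_j-\lambda_1)^{p-1}c_j$, viewed as a quadratic form in $\mu$. $H^0=L^2$. *)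

theory Defs
  imports "HOL-Analysis.Analysis"
begin

definition phi :: "nat \<Rightarrow> real \<Rightarrow> real" where
  "phi j x = sqrt 2 * sin (real j * pi * x)"

definition lam :: "nat \<Rightarrow> real" where
  "lam j = (real j * pi)^2"

definition L2inner :: "(real \<Rightarrow> real) \<Rightarrow> (real \<Rightarrow> real) \<Rightarrow> real" where
  "L2inner f g = integral {0..1} (\<lambda>x. f x * g x)"

definition test_fun :: "(real \<Rightarrow> real) set" where
  "test_fun = {\<mu>. (\<forall>k x. ((deriv ^^ k) \<mu>) differentiable (at x)) \<and>
                 (\<exists>a b. 0 < a \<and> a \<le> b \<and> b < 1 \<and> (\<forall>x. x \<notin> {a..b} \<longrightarrow> \<mu> x = 0))}"

definition cc :: "nat \<Rightarrow> nat \<Rightarrow> (real \<Rightarrow> real) \<Rightarrow> real" where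
  "cc K j \<mu> = L2inner (\<lambda>x. \<mu> x * phi 1 x) (phi j) * L2inner (\<lambda>x. \<mu> x * phi K x) (phi j)"

definition AKp :: "nat \<Rightarrow> nat \<Rightarrow> (real \<Rightarrow> real) \<Rightarrow> real" where
  "AKp p K \<mu> = (-1)^(p-1) *
     (\<Sum>i. let j = Suc i in
        (lam j - (lam 1 + lam K) / 2) * (lam K - lam j)^(p-1) * (lam j - lam 1)^(p-1) * cc K j \<mu>)"

definition Hnorm_sq :: "nat \<Rightarrow> (real \<Rightarrow> real) \<Rightarrow> real" where
  "Hnorm_sq m \<mu> = (\<Sum>k\<le>m. integral {0..1} (\<lambda>x. ((deriv ^^ k) \<mu> x)^2))"

definition quadratic_form_on :: "(real \<Rightarrow> real) set \<Rightarrow> ((real \<Rightarrow> real) \<Rightarrow> real) \<Rightarrow> bool" where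
  "quadratic_form_on S Q \<longleftrightarrow> (\<exists>B.
     (\<forall>u\<in>S. Q u = B u u) \<and>
     (\<forall>u\<in>S. \<forall>v\<in>S. \<forall>w\<in>S. \<forall>a b::real.
        B (\<lambda>x. a * u x + b * v x) w = a * B u w + b * B v w \<and>
        B w (\<lambda>x. a * u x + b * v x) = a * B w u + b * B w v))"

end

theory Submission
  imports Defs
begin

text \<open>
  Let \<open>n = p - 1\<close>, \<open>m = (\<lambda>\<^sub>1 + \<lambda>\<^sub>K) / 2\<close> and \<open>L(\<lambda>) f = - f'' - \<lambda> f\<close>. For test functions
  \<open>\<langle>L(\<lambda>) f, \<phi>\<^sub>j\<rangle> = (\<lambda>\<^sub>j - \<lambda>) \<langle>f, \<phi>\<^sub>j\<rangle>\<close>, so the \<open>j\<close>-th term of \<open>A\<^sup>p\<^sub>K(\<mu>)\<close> is \<open>(-1)\<^sup>n\<close> times the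
  product of the \<open>j\<close>-th sine coefficients of \<open>L(m) U\<close> and \<open>V\<close>, where \<open>U = L(\<lambda>\<^sub>1)\<^sup>n (\<mu> \<phi>\<^sub>1)\<close>
  and \<open>V = L(\<lambda>\<^sub>K)\<^sup>n (\<mu> \<phi>\<^sub>K)\<close>. Parseval's identity and an integration by parts give
  \<open>A\<^sup>p\<^sub>K(\<mu>) = \<langle>U', V'\<rangle> - m \<langle>U, V\<rangle>\<close>.

  Both \<open>U\<close> and \<open>V\<close> are differential operators of order \<open>2n\<close> in \<open>\<mu>\<close> with trigonometric
  coefficients, and their leading coefficients are \<open>(-1)\<^sup>n \<surd>2 sin (\<pi> x)\<close> and
  \<open>(-1)\<^sup>n \<surd>2 sin (K \<pi> x)\<close>. Hence the product of the two top-order terms of \<open>U'\<close> and \<open>V'\<close>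
  contributes \<open>\<langle>(\<mu>\<^sup>(\<^sup>2\<^sup>n\<^sup>+\<^sup>1\<^sup>))\<^sup>2 \<phi>\<^sub>1, \<phi>\<^sub>K\<rangle>\<close>, while every other term contains the derivative of order
  \<open>2n + 1\<close> at most once; one more integration by parts bounds it by the \<open>H\<^sup>2\<^sup>n\<close> norm.
\<close>

section \<open>Sine series on \<open>[0, 1]\<close>\<close>

lemma has_integral_01_of_derivative:
  assumes "\<And>x. (F has_real_derivative f x) (at x)"
  shows "(f has_integral (F 1 - F 0)) {0..1::real}"
  by (rule fundamental_theorem_of_calculus)
    (use assms in \<open>auto intro: has_field_derivative_at_within
       simp: has_real_derivative_iff_has_vector_derivative[symmetric]\<close>)

lemma integral_by_parts_01:
  assumes "\<And>x. (f has_real_derivative f' x) (at x)" and "\<And>x. (g has_real_derivative g' x) (at x)"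
    and "continuous_on {0..1} f'" and "continuous_on {0..1} g'"
    and "f 0 = 0" and "f 1 = 0"
  shows "integral {0..1} (\<lambda>x. f' x * g x) = - integral {0..1} (\<lambda>x. f x * g' x)"
proof -
  have cont: "continuous_on {0..1} f" "continuous_on {0..1} g"
    using assms(1,2) by (auto intro!: continuous_at_imp_continuous_on DERIV_isCont)
  have "((\<lambda>x. f' x * g x + f x * g' x) has_integral 0) {0..1}"
    using has_integral_01_of_derivative[OF DERIV_mult[OF assms(1,2)]] assms(5,6) by (simp add: mult.commute)
  then have "integral {0..1} (\<lambda>x. f' x * g x + f x * g' x) = 0"
    by (rule integral_unique)
  then show ?thesis
    by (simp add: integral_add integrable_continuous_interval continuous_intros cont assms(3,4))
qed

lemma sin_mult_sin_has_integral:
  "((\<lambda>x. sin (real i * pi * x) * sin (real j * pi * x)) has_integral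
     (if i = j \<and> i \<noteq> 0 then 1/2 else 0)) {0..1}"
proof (cases "i = j")
  case True
  show ?thesis
  proof (cases "i = 0")
    case False
    define s where "s = 2 * real i * pi"
    have "s \<noteq> 0" using False by (simp add: s_def)
    have "((\<lambda>x. (x - sin (s * x) / s) / 2) has_real_derivative
        sin (real i * pi * x) * sin (real j * pi * x)) (at x)" for x
    proof -
      have "s * x = 2 * (real i * pi * x)" by (simp add: s_def)
      then have "cos (s * x) = 1 - 2 * sin (real i * pi * x) ^ 2"
        by (simp only: cos_double_sin)
      then show ?thesis
        using \<open>s \<noteq> 0\<close> \<open>i = j\<close>
        by (auto intro!: derivative_eq_intros simp: power2_eq_square)
    qed
    moreover have "sin s = 0"
      by (metis s_def mult.commute of_nat_numeral of_nat_mult sin_npi)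
    ultimately show ?thesis using has_integral_01_of_derivative False \<open>i = j\<close> by fastforce
  qed (use \<open>i = j\<close> in simp)
next
  case False
  define d where "d = (real i - real j) * pi"
  define s where "s = (real i + real j) * pi"
  have "d \<noteq> 0" "s \<noteq> 0" using False by (auto simp: d_def s_def)
  have "((\<lambda>x. (sin (d * x) / d - sin (s * x) / s) / 2) has_real_derivative
        sin (real i * pi * x) * sin (real j * pi * x)) (at x)" for x
  proof -
    have "d * x = real i * pi * x - real j * pi * x" "s * x = real i * pi * x + real j * pi * x"
      by (simp_all add: d_def s_def algebra_simps)
    then have "(cos (d * x) - cos (s * x)) / 2 = sin (real i * pi * x) * sin (real j * pi * x)"
      by (simp only: sin_times_sin)
    then show ?thesis
      using \<open>d \<noteq> 0\<close> \<open>s \<noteq> 0\<close> by (auto intro!: derivative_eq_intros)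
  qed
  moreover have "sin d = 0" "sin s = 0"
    by (simp_all add: d_def s_def left_diff_distrib distrib_right sin_diff sin_add)
  ultimately show ?thesis using has_integral_01_of_derivative False by fastforce
qed

lemma continuous_on_phi [continuous_intros]: "continuous_on S (phi k)"
  unfolding phi_def by (intro continuous_intros)

lemma phi_0 [simp]: "phi 0 = (\<lambda>x. 0)"
  by (simp add: phi_def fun_eq_iff)

lemma phi_mult_phi_integral:
  "integral {0..1} (\<lambda>x. phi i x * phi j x) = (if i = j \<and> i \<noteq> 0 then 1 else 0)"
proof -
  have "(\<lambda>x. phi i x * phi j x) = (\<lambda>x. 2 * (sin (real i * pi * x) * sin (real j * pi * x)))"
  proof
    fix x
    have "sqrt 2 * (sqrt 2 * y) = 2 * y" for y :: real by (simp flip: mult.assoc)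
    then show "phi i x * phi j x = 2 * (sin (real i * pi * x) * sin (real j * pi * x))"
      by (simp add: phi_def mult_ac)
  qed
  then show ?thesis
    using integral_unique[OF has_integral_mult_right[OF sin_mult_sin_has_integral, of 2 i j]]
    by (simp split: if_splits)
qed

definition fourier_coeff :: "nat \<Rightarrow> (real \<Rightarrow> real) \<Rightarrow> real" where
  "fourier_coeff k f = L2inner f (phi k)"

lemma fourier_coeff_0 [simp]: "fourier_coeff 0 f = 0"
  by (simp add: fourier_coeff_def L2inner_def)

lemma L2inner_commute: "L2inner f g = L2inner g f"
  unfolding L2inner_def by (simp add: mult.commute)

lemma L2inner_add_left:
  "continuous_on {0..1} f \<Longrightarrow> continuous_on {0..1} g \<Longrightarrow> continuous_on {0..1} h \<Longrightarrow>
   L2inner (\<lambda>x. f x + g x) h = L2inner f h + L2inner g h"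
  unfolding L2inner_def by (simp add: distrib_right integral_add continuous_intros integrable_continuous_interval)

lemma L2inner_add_right:
  assumes "continuous_on {0..1} f" "continuous_on {0..1} g" "continuous_on {0..1} h"
  shows "L2inner h (\<lambda>x. f x + g x) = L2inner h f + L2inner h g"
proof -
  have "L2inner h (\<lambda>x. f x + g x) = L2inner f h + L2inner g h"
    using L2inner_add_left[OF assms] L2inner_commute[of h] by simp
  then show ?thesis by (simp add: L2inner_commute[of _ h])
qed

lemma L2inner_scale_left: "L2inner (\<lambda>x. c * f x) h = c * L2inner f h"
  unfolding L2inner_def by (simp add: mult.assoc)

lemma fourier_coeff_add:
  "continuous_on {0..1} f \<Longrightarrow> continuous_on {0..1} g \<Longrightarrow>
   fourier_coeff k (\<lambda>x. f x + g x) = fourier_coeff k f + fourier_coeff k g"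
  unfolding fourier_coeff_def by (simp add: L2inner_add_left continuous_intros)

lemma fourier_coeff_scale: "fourier_coeff k (\<lambda>x. c * f x) = c * fourier_coeff k f"
  unfolding fourier_coeff_def by (rule L2inner_scale_left)

lemma bessel_inequality:
  assumes f: "continuous_on {0..1} f" and F: "finite F"
  shows "(\<Sum>k\<in>F. fourier_coeff k f ^ 2) \<le> L2inner f f"
proof -
  define c where "c k = fourier_coeff k f" for k
  define S where "S x = (\<Sum>k\<in>F. c k * phi k x)" for x
  have cS: "continuous_on {0..1} S" unfolding S_def by (intro continuous_intros)
  have fS: "integral {0..1} (\<lambda>x. f x * S x) = (\<Sum>k\<in>F. c k * c k)"
  proof -
    have "integral {0..1} (\<lambda>x. f x * S x) = integral {0..1} (\<lambda>x. \<Sum>k\<in>F. c k * (f x * phi k x))"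
      by (simp add: S_def sum_distrib_left algebra_simps)
    also have "\<dots> = (\<Sum>k\<in>F. integral {0..1} (\<lambda>x. c k * (f x * phi k x)))"
      by (rule integral_sum[OF F]) (intro integrable_continuous_interval continuous_intros f)
    finally show ?thesis by (simp add: c_def fourier_coeff_def L2inner_def)
  qed
  have SS: "integral {0..1} (\<lambda>x. S x * S x) = (\<Sum>k\<in>F. c k * c k)"
  proof -
    have "integral {0..1} (\<lambda>x. S x * S x) =
       integral {0..1} (\<lambda>x. \<Sum>k\<in>F. \<Sum>l\<in>F. c k * c l * (phi k x * phi l x))"
      by (simp add: S_def sum_product algebra_simps)
    also have "\<dots> = (\<Sum>k\<in>F. integral {0..1} (\<lambda>x. \<Sum>l\<in>F. c k * c l * (phi k x * phi l x)))"
      by (rule integral_sum[OF F]) (intro integrable_continuous_interval continuous_intros)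
    also have "\<dots> = (\<Sum>k\<in>F. \<Sum>l\<in>F. integral {0..1} (\<lambda>x. c k * c l * (phi k x * phi l x)))"
      by (intro sum.cong refl integral_sum[OF F]) (intro integrable_continuous_interval continuous_intros)
    also have "\<dots> = (\<Sum>k\<in>F. \<Sum>l\<in>F. if l = k then c k * c k else 0)"
      by (intro sum.cong refl) (auto simp: phi_mult_phi_integral c_def)
    finally show ?thesis using F by simp
  qed
  have "0 \<le> integral {0..1} (\<lambda>x. (f x - S x) * (f x - S x))"
    by (intro integral_nonneg integrable_continuous_interval continuous_intros f cS) auto
  also have "\<dots> = integral {0..1} (\<lambda>x. f x * f x - 2 * (f x * S x) + S x * S x)"
    by (simp add: algebra_simps)
  also have "\<dots> = integral {0..1} (\<lambda>x. f x * f x) - 2 * integral {0..1} (\<lambda>x. f x * S x)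
      + integral {0..1} (\<lambda>x. S x * S x)"
    by (subst integral_add integral_diff, (intro integrable_continuous_interval continuous_intros f cS)+)+ simp
  finally show ?thesis using fS SS by (simp add: L2inner_def c_def power2_eq_square)
qed

lemma summable_fourier_coeff_sq:
  assumes "continuous_on {0..1} f"
  shows "summable (\<lambda>i. fourier_coeff (Suc i) f ^ 2)"
    and "(\<Sum>i. fourier_coeff (Suc i) f ^ 2) \<le> L2inner f f"
proof -
  have bound: "(\<Sum>i<n. fourier_coeff (Suc i) f ^ 2) \<le> L2inner f f" for n
    using bessel_inequality[OF assms, of "Suc ` {..<n}"] by (simp add: sum.reindex)
  show "summable (\<lambda>i. fourier_coeff (Suc i) f ^ 2)"
    by (rule summableI_nonneg_bounded[OF _ bound]) simp
  then show "(\<Sum>i. fourier_coeff (Suc i) f ^ 2) \<le> L2inner f f"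
    by (rule suminf_le_const[OF _ bound])
qed

lemma summable_fourier_coeff_product:
  assumes "continuous_on {0..1} f" and "continuous_on {0..1} g"
  shows "summable (\<lambda>i. fourier_coeff (Suc i) f * fourier_coeff (Suc i) g)"
proof (rule summable_comparison_test'[where N=0])
  show "summable (\<lambda>i. (fourier_coeff (Suc i) f ^ 2 + fourier_coeff (Suc i) g ^ 2) / 2)"
    by (intro summable_divide summable_add summable_fourier_coeff_sq assms)
  show "norm (fourier_coeff (Suc n) f * fourier_coeff (Suc n) g)
          \<le> (fourier_coeff (Suc n) f ^ 2 + fourier_coeff (Suc n) g ^ 2) / 2" for n
    using sum_squares_bound[of "\<bar>fourier_coeff (Suc n) f\<bar>" "\<bar>fourier_coeff (Suc n) g\<bar>"]
    by (simp add: abs_mult power2_eq_square)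
qed

definition fourier_pairing :: "(real \<Rightarrow> real) \<Rightarrow> (real \<Rightarrow> real) \<Rightarrow> real" where
  "fourier_pairing f g = (\<Sum>i. fourier_coeff (Suc i) f * fourier_coeff (Suc i) g)"

lemma fourier_pairing_commute: "fourier_pairing f g = fourier_pairing g f"
  unfolding fourier_pairing_def by (simp add: mult.commute)

lemma fourier_pairing_add_left:
  assumes "continuous_on {0..1} f" "continuous_on {0..1} g" "continuous_on {0..1} h"
  shows "fourier_pairing (\<lambda>x. f x + g x) h = fourier_pairing f h + fourier_pairing g h"
  unfolding fourier_pairing_def using assms
  by (simp add: fourier_coeff_add distrib_right
      suminf_add[OF summable_fourier_coeff_product summable_fourier_coeff_product])

lemma fourier_pairing_scale_left:
  assumes "continuous_on {0..1} f" "continuous_on {0..1} h"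
  shows "fourier_pairing (\<lambda>x. c * f x) h = c * fourier_pairing f h"
  unfolding fourier_pairing_def using assms
  by (simp add: fourier_coeff_scale mult.assoc suminf_mult[OF summable_fourier_coeff_product])

inductive sine_poly :: "(real \<Rightarrow> real) \<Rightarrow> bool" where
  sine_poly_sin: "sine_poly (\<lambda>x. sin (real j * pi * x))"
| sine_poly_add: "sine_poly f \<Longrightarrow> sine_poly g \<Longrightarrow> sine_poly (\<lambda>x. f x + g x)"
| sine_poly_scale: "sine_poly f \<Longrightarrow> sine_poly (\<lambda>x. c * f x)"

lemma sine_poly_continuous_on: "sine_poly f \<Longrightarrow> continuous_on S f"
  by (induction rule: sine_poly.induct) (auto intro!: continuous_intros)

lemma fourier_coeff_sin:
  "fourier_coeff k (\<lambda>x. sin (real j * pi * x)) = (if k = j \<and> k \<noteq> 0 then sqrt 2 / 2 else 0)"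
proof -
  have "fourier_coeff k (\<lambda>x. sin (real j * pi * x))
      = sqrt 2 * integral {0..1} (\<lambda>x. sin (real k * pi * x) * sin (real j * pi * x))"
    unfolding fourier_coeff_def L2inner_def phi_def by (simp add: mult_ac)
  then show ?thesis
    using integral_unique[OF sin_mult_sin_has_integral[of k j]] by simp
qed

lemma fourier_pairing_sine_poly:
  assumes "sine_poly s" and "continuous_on {0..1} t"
  shows "fourier_pairing s t = L2inner s t"
  using assms(1)
proof (induction rule: sine_poly.induct)
  case (sine_poly_sin j)
  show ?case
  proof (cases j)
    case 0
    then show ?thesis by (simp add: fourier_pairing_def fourier_coeff_def L2inner_def)
  next
    case (Suc m)
    have "fourier_pairing (\<lambda>x. sin (real j * pi * x)) t
        = (\<Sum>i. if i = m then sqrt 2 / 2 * fourier_coeff j t else 0)"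
      unfolding fourier_pairing_def fourier_coeff_sin using Suc
      by (intro arg_cong[where f=suminf] ext) auto
    also have "\<dots> = sqrt 2 / 2 * fourier_coeff j t"
      by (simp add: suminf_eq_zero_iff sums_single[THEN sums_unique, symmetric])
    also have "\<dots> = L2inner (\<lambda>x. sin (real j * pi * x)) t"
    proof -
      have sq: "sqrt 2 / 2 * (sqrt 2 * y) = y" "sqrt 2 * (sqrt 2 * y) = 2 * y" for y :: real
        by (simp_all flip: mult.assoc)
      show ?thesis unfolding fourier_coeff_def L2inner_def phi_def
        by (simp add: mult_ac sq flip: integral_mult_right)
    qed
    finally show ?thesis .
  qed
next
  case (sine_poly_add f g)
  then show ?case using assms(2) sine_poly_continuous_on[of f] sine_poly_continuous_on[of g]
    by (simp add: fourier_pairing_add_left L2inner_add_left)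
next
  case (sine_poly_scale f c)
  then show ?case using assms(2) sine_poly_continuous_on[of f]
    by (simp add: fourier_pairing_scale_left L2inner_scale_left)
qed

definition sine_approximable :: "(real \<Rightarrow> real) \<Rightarrow> bool" where
  "sine_approximable f \<longleftrightarrow> (\<forall>e>0. \<exists>s. sine_poly s \<and> (\<forall>x\<in>{0..1}. \<bar>f x - s x\<bar> \<le> e))"

lemma sine_approximable_add:
  assumes "sine_approximable f" and "sine_approximable g"
  shows "sine_approximable (\<lambda>x. f x + g x)"
  unfolding sine_approximable_def
proof (intro allI impI)
  fix e :: real assume "e > 0"
  then obtain s1 s2 where s1: "sine_poly s1" "\<forall>x\<in>{0..1}. \<bar>f x - s1 x\<bar> \<le> e/2"
    and s2: "sine_poly s2" "\<forall>x\<in>{0..1}. \<bar>g x - s2 x\<bar> \<le> e/2"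
    using assms unfolding sine_approximable_def by (meson half_gt_zero)
  then show "\<exists>s. sine_poly s \<and> (\<forall>x\<in>{0..1}. \<bar>f x + g x - s x\<bar> \<le> e)"
  proof (intro exI[of _ "\<lambda>x. s1 x + s2 x"] conjI ballI sine_poly_add)
    fix x :: real assume "x \<in> {0..1}"
    then have "\<bar>f x - s1 x\<bar> \<le> e/2" "\<bar>g x - s2 x\<bar> \<le> e/2" using s1 s2 by auto
    then show "\<bar>f x + g x - (s1 x + s2 x)\<bar> \<le> e" by linarith
  qed
qed

lemma sine_poly_mult_cos:
  "sine_poly s \<Longrightarrow> sine_poly (\<lambda>x. s x * cos (pi * x))"
proof (induction rule: sine_poly.induct)
  case (sine_poly_sin j)
  show ?case
  proof (cases j)
    case 0
    then show ?thesis using sine_poly.sine_poly_sin[of 0] by simp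
  next
    case (Suc m)
    have "(\<lambda>x. sin (real j * pi * x) * cos (pi * x))
        = (\<lambda>x. 1/2 * (sin (real (Suc j) * pi * x) + sin (real m * pi * x)))"
    proof
      fix x
      have "real j * pi * x + pi * x = real (Suc j) * pi * x" "real j * pi * x - pi * x = real m * pi * x"
        using Suc by (simp_all add: algebra_simps)
      then show "sin (real j * pi * x) * cos (pi * x)
          = 1/2 * (sin (real (Suc j) * pi * x) + sin (real m * pi * x))"
        using sin_times_cos[of "real j * pi * x" "pi * x"] by simp
    qed
    then show ?thesis by (simp only:) (intro sine_poly.intros)
  qed
qed (auto simp: distrib_right mult.assoc intro: sine_poly.intros)

lemma sine_poly_sin_mult_cos_power: "sine_poly (\<lambda>x. sin (pi * x) * cos (pi * x) ^ i)"
proof (induction i)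
  case (Suc i)
  from sine_poly_mult_cos[OF Suc] show ?case by (simp add: mult_ac)
qed (use sine_poly_sin[of 1] in simp)

lemma sine_poly_sin_mult_cos_poly:
  "sine_poly (\<lambda>x. sin (pi * x) * (\<Sum>i\<le>n. a i * cos (pi * x) ^ i))"
proof (induction n)
  case 0
  show ?case using sine_poly_scale[OF sine_poly_sin_mult_cos_power[of 0], of "a 0"]
    by (simp add: mult.commute)
next
  case (Suc n)
  show ?case
    using sine_poly_add[OF Suc sine_poly_scale[OF sine_poly_sin_mult_cos_power[of "Suc n"], of "a (Suc n)"]]
    by (simp add: distrib_left mult_ac)
qed

text \<open>Write \<open>f x = sin (pi * x) * g (cos (pi * x))\<close> with \<open>g\<close> continuous on \<open>[-1, 1]\<close>
  (possible because \<open>f\<close> vanishes near the zeros of the sine) and approximate \<open>g\<close> by polynomials.\<close>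

lemma sine_approximable_compact_support:
  assumes cont: "\<And>x. isCont f x" and "0 < a" "b < 1" and zero: "\<And>x. x \<notin> {a..b} \<Longrightarrow> f x = 0"
  shows "sine_approximable f"
  unfolding sine_approximable_def
proof (intro allI impI)
  fix e :: real assume "e > 0"
  define g where "g x = f x / sin (pi * x)" for x
  have f_eq: "f x = sin (pi * x) * g x" if "x \<in> {0..1}" for x
  proof (cases "x \<in> {a..b}")
    case True
    with \<open>0 < a\<close> \<open>b < 1\<close> have "sin (pi * x) > 0" by (intro sin_gt_zero) auto
    then show ?thesis by (simp add: g_def)
  qed (simp add: zero g_def)
  have "\<forall>x\<in>{0..1}. isCont g x"
  proof
    fix x :: real assume "x \<in> {0..1}"
    then consider "x < a" | "x > b" | "0 < x" "x < 1" using \<open>0 < a\<close> \<open>b < 1\<close> by fastforce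
    then show "isCont g x"
    proof cases
      case 1
      have "eventually (\<lambda>y. g y = 0) (nhds x)"
        using 1 zero by (intro eventually_nhds_in_open[THEN eventually_mono, of "{..<a}"])
          (auto simp: g_def)
      then show ?thesis by (subst isCont_cong) auto
    next
      case 2
      have "eventually (\<lambda>y. g y = 0) (nhds x)"
        using 2 zero by (intro eventually_nhds_in_open[THEN eventually_mono, of "{b<..}"])
          (auto simp: g_def)
      then show ?thesis by (subst isCont_cong) auto
    next
      case 3
      then have "sin (pi * x) \<noteq> 0" using sin_gt_zero[of "pi * x"] by fastforce
      then show ?thesis unfolding g_def by (intro continuous_intros cont)
    qed
  qed
  then have "continuous_on {0..1} g"
    by (rule continuous_at_imp_continuous_on)
  then have "continuous_on {-1..1} (\<lambda>t. g (arccos t / pi))"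
  proof (rule continuous_on_compose2)
    show "continuous_on {-1..1} (\<lambda>t. arccos t / pi)" by (intro continuous_intros) auto
    show "(\<lambda>t. arccos t / pi) ` {-1..1} \<subseteq> {0..1}"
      using arccos_lbound arccos_ubound by (auto simp: field_simps)
  qed
  then obtain P where "real_polynomial_function P"
      and P: "\<And>t. t \<in> {-1..1} \<Longrightarrow> \<bar>g (arccos t / pi) - P t\<bar> < e"
    using Stone_Weierstrass_real_polynomial_function[OF compact_Icc _ \<open>e > 0\<close>] by blast
  then obtain c n where P_eq: "P = (\<lambda>x. \<Sum>i\<le>n. c i * x ^ i)"
    using real_polynomial_function_iff_sum by blast
  show "\<exists>s. sine_poly s \<and> (\<forall>x\<in>{0..1}. \<bar>f x - s x\<bar> \<le> e)"
  proof (intro exI[of _ "\<lambda>x. sin (pi * x) * P (cos (pi * x))"] conjI ballI)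
    show "sine_poly (\<lambda>x. sin (pi * x) * P (cos (pi * x)))"
      unfolding P_eq by (rule sine_poly_sin_mult_cos_poly)
    fix x :: real assume x: "x \<in> {0..1}"
    have "\<bar>g x - P (cos (pi * x))\<bar> \<le> e"
      using P[of "cos (pi * x)"] x by (simp add: arccos_cos)
    then have "\<bar>sin (pi * x)\<bar> * \<bar>g x - P (cos (pi * x))\<bar> \<le> 1 * e"
      by (intro mult_mono) auto
    then show "\<bar>f x - sin (pi * x) * P (cos (pi * x))\<bar> \<le> e"
      by (simp add: f_eq[OF x] abs_mult[symmetric] right_diff_distrib)
  qed
qed

lemma fourier_pairing_diagonal:
  assumes f: "continuous_on {0..1} f" and "sine_approximable f"
  shows "fourier_pairing f f = L2inner f f"
proof -
  have "\<bar>fourier_pairing f f - L2inner f f\<bar> \<le> e" if "e > 0" for e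
  proof -
    obtain s where s: "sine_poly s" "\<forall>x\<in>{0..1}. \<bar>f x - s x\<bar> \<le> sqrt e"
      using assms(2) \<open>e > 0\<close> unfolding sine_approximable_def by (meson real_sqrt_gt_zero)
    define r where "r x = f x - s x" for x
    have cs: "continuous_on {0..1} s" by (rule sine_poly_continuous_on[OF s(1)])
    have cr: "continuous_on {0..1} r" unfolding r_def by (intro continuous_intros f cs)
    have f_eq: "f = (\<lambda>x. s x + r x)" by (simp add: r_def)
    have "fourier_pairing f f = L2inner s f + L2inner s r + fourier_pairing r r"
    proof -
      have "fourier_pairing f f = fourier_pairing s f + fourier_pairing r f"
        by (subst (1) f_eq) (intro fourier_pairing_add_left cs cr f)
      also have "fourier_pairing r f = fourier_pairing f r" by (rule fourier_pairing_commute)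
      also have "fourier_pairing f r = fourier_pairing s r + fourier_pairing r r"
        by (subst (1) f_eq) (intro fourier_pairing_add_left cs cr)
      finally show ?thesis
        using fourier_pairing_sine_poly[OF s(1) f] fourier_pairing_sine_poly[OF s(1) cr] by simp
    qed
    moreover have "L2inner f f = L2inner s f + L2inner s r + L2inner r r"
    proof -
      have "L2inner f f = L2inner s f + L2inner r f"
        by (subst (1) f_eq) (intro L2inner_add_left cs cr f)
      also have "L2inner r f = L2inner f r" by (rule L2inner_commute)
      also have "L2inner f r = L2inner s r + L2inner r r"
        by (subst (1) f_eq) (intro L2inner_add_left cs cr)
      finally show ?thesis by simp
    qed
    moreover have "L2inner r r \<le> e"
    proof -
      have "r x * r x \<le> e" if "x \<in> {0..1}" for x
        using s(2) that abs_le_square_iff[of "r x" "sqrt e"] \<open>e > 0\<close>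
        by (simp add: r_def power2_eq_square)
      then have "L2inner r r \<le> integral {0..1} (\<lambda>x::real. e)"
        unfolding L2inner_def by (intro integral_le integrable_continuous_interval continuous_intros cr) auto
      then show ?thesis by simp
    qed
    moreover have "0 \<le> fourier_pairing r r" "fourier_pairing r r \<le> L2inner r r"
      using summable_fourier_coeff_sq[OF cr]
      by (auto simp: fourier_pairing_def power2_eq_square intro!: suminf_nonneg)
    ultimately show ?thesis by linarith
  qed
  then have "\<bar>fourier_pairing f f - L2inner f f\<bar> \<le> 0"
    by (rule field_le_epsilon) simp
  then show ?thesis by simp
qed

theorem parseval:
  assumes f: "continuous_on {0..1} f" "sine_approximable f"
    and g: "continuous_on {0..1} g" "sine_approximable g"
  shows "fourier_pairing f g = L2inner f g"
proof -
  have fg: "continuous_on {0..1} (\<lambda>x. f x + g x)" by (intro continuous_intros f g)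
  have "fourier_pairing (\<lambda>x. f x + g x) (\<lambda>x. f x + g x)
      = fourier_pairing f f + 2 * fourier_pairing f g + fourier_pairing g g"
    using fourier_pairing_add_left[OF f(1) g(1) fg] fourier_pairing_add_left[OF f(1) g(1) f(1)]
      fourier_pairing_add_left[OF f(1) g(1) g(1)] fourier_pairing_commute[of f "\<lambda>x. f x + g x"]
      fourier_pairing_commute[of g "\<lambda>x. f x + g x"] fourier_pairing_commute[of g f]
    by simp
  moreover have "L2inner (\<lambda>x. f x + g x) (\<lambda>x. f x + g x)
      = L2inner f f + 2 * L2inner f g + L2inner g g"
    using L2inner_add_left[OF f(1) g(1) fg] L2inner_add_left[OF f(1) g(1) f(1)]
      L2inner_add_left[OF f(1) g(1) g(1)] L2inner_commute[of f "\<lambda>x. f x + g x"]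
      L2inner_commute[of g "\<lambda>x. f x + g x"] L2inner_commute[of g f]
    by simp
  ultimately show ?thesis
    using fourier_pairing_diagonal[OF fg sine_approximable_add[OF f(2) g(2)]]
      fourier_pairing_diagonal[OF f] fourier_pairing_diagonal[OF g] by linarith
qed

section \<open>Test functions and the operator \<open>-d\<^sup>2/dx\<^sup>2 - \<lambda>\<close>\<close>

definition nth_deriv :: "nat \<Rightarrow> (real \<Rightarrow> real) \<Rightarrow> real \<Rightarrow> real" where
  "nth_deriv k f = (deriv ^^ k) f"

lemma nth_deriv_0 [simp]: "nth_deriv 0 f = f"
  by (simp add: nth_deriv_def)

lemma nth_deriv_Suc: "nth_deriv (Suc k) f = deriv (nth_deriv k f)"
  by (simp add: nth_deriv_def)

lemma nth_deriv_Suc': "nth_deriv (Suc k) f = nth_deriv k (deriv f)"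
  by (simp add: nth_deriv_def funpow_Suc_right del: funpow.simps)

lemma test_fun_has_derivative:
  assumes "\<mu> \<in> test_fun"
  shows "(nth_deriv k \<mu> has_real_derivative nth_deriv (Suc k) \<mu> x) (at x)"
  using assms unfolding test_fun_def nth_deriv_Suc
  by (simp add: nth_deriv_def DERIV_deriv_iff_real_differentiable)

lemma test_fun_differentiable: "\<mu> \<in> test_fun \<Longrightarrow> nth_deriv k \<mu> differentiable (at x)"
  using test_fun_has_derivative real_differentiable_def by blast

lemma test_funI:
  assumes "\<And>k x. nth_deriv k \<mu> differentiable (at x)"
    and "0 < a" "a \<le> b" "b < 1" "\<And>x. x \<notin> {a..b} \<Longrightarrow> \<mu> x = 0"
  shows "\<mu> \<in> test_fun"
  using assms unfolding test_fun_def nth_deriv_def by blast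

lemma test_fun_isCont: "\<mu> \<in> test_fun \<Longrightarrow> isCont (nth_deriv k \<mu>) x"
  using test_fun_has_derivative DERIV_isCont by blast

lemma continuous_on_nth_deriv [continuous_intros]: "\<mu> \<in> test_fun \<Longrightarrow> continuous_on S (nth_deriv k \<mu>)"
  by (simp add: continuous_at_imp_continuous_on test_fun_isCont)

lemma test_fun_continuous_on: "\<mu> \<in> test_fun \<Longrightarrow> continuous_on S \<mu>"
  using continuous_on_nth_deriv[of \<mu> S 0] by simp

lemma derivative_vanishes_outside:
  assumes "\<And>x. (f has_real_derivative f' x) (at x)" and "\<And>x. x \<notin> {a..b} \<Longrightarrow> f x = 0"
    and "x \<notin> {a..b}"
  shows "f' x = 0"
proof -
  define S where "S = {..<a} \<union> {b<..}"
  have "open S" "x \<in> S" "\<And>y. y \<in> S \<Longrightarrow> 0 = f y"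
    using assms(2,3) by (auto simp: S_def)
  then have "(f has_real_derivative 0) (at x)"
    using has_field_derivative_transform_within_open[OF DERIV_const] by blast
  then show ?thesis using assms(1) DERIV_unique by blast
qed

lemma test_fun_support:
  assumes "\<mu> \<in> test_fun"
  obtains a b where "0 < a" "a \<le> b" "b < 1" "\<And>k x. x \<notin> {a..b} \<Longrightarrow> nth_deriv k \<mu> x = 0"
proof -
  obtain a b where ab: "0 < a" "a \<le> b" "b < 1" "\<And>x. x \<notin> {a..b} \<Longrightarrow> \<mu> x = 0"
    using assms unfolding test_fun_def by blast
  have "x \<notin> {a..b} \<Longrightarrow> nth_deriv k \<mu> x = 0" for k x
  proof (induction k arbitrary: x)
    case (Suc k)
    then show ?case by (rule derivative_vanishes_outside[OF test_fun_has_derivative[OF assms]])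
  qed (simp add: ab)
  with ab show ?thesis using that by blast
qed

lemma test_fun_boundary [simp]:
  assumes "\<mu> \<in> test_fun"
  shows "nth_deriv k \<mu> 0 = 0" and "nth_deriv k \<mu> 1 = 0"
  by (rule test_fun_support[OF assms], fastforce)+

lemma nth_deriv_lincomb:
  assumes "u \<in> test_fun" and "v \<in> test_fun"
  shows "nth_deriv k (\<lambda>x. a * u x + b * v x) = (\<lambda>x. a * nth_deriv k u x + b * nth_deriv k v x)"
proof (induction k)
  case (Suc k)
  have "((\<lambda>x. a * nth_deriv k u x + b * nth_deriv k v x) has_real_derivative
      a * nth_deriv (Suc k) u x + b * nth_deriv (Suc k) v x) (at x)" for x
    by (intro DERIV_add DERIV_cmult test_fun_has_derivative assms)
  then show ?case unfolding nth_deriv_Suc[of k] Suc by (intro ext DERIV_imp_deriv)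
qed simp

lemma test_fun_lincomb:
  assumes "u \<in> test_fun" and "v \<in> test_fun"
  shows "(\<lambda>x. a * u x + b * v x) \<in> test_fun"
proof -
  obtain a1 b1 a2 b2 where ab: "0 < a1" "a1 \<le> b1" "b1 < 1" "\<And>x. x \<notin> {a1..b1} \<Longrightarrow> u x = 0"
    "0 < a2" "a2 \<le> b2" "b2 < 1" "\<And>x. x \<notin> {a2..b2} \<Longrightarrow> v x = 0"
    using test_fun_support[OF assms(1)] test_fun_support[OF assms(2)] by (metis nth_deriv_0)
  show ?thesis
  proof (rule test_funI[of _ "min a1 a2" "max b1 b2"])
    show "nth_deriv k (\<lambda>x. a * u x + b * v x) differentiable (at x)" for k x
      unfolding nth_deriv_lincomb[OF assms]
      by (intro derivative_intros test_fun_differentiable assms)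
    show "a * u x + b * v x = 0" if "x \<notin> {min a1 a2..max b1 b2}" for x
    proof -
      have "x \<notin> {a1..b1}" "x \<notin> {a2..b2}" using that by auto
      then show ?thesis using ab(4,8) by simp
    qed
  qed (use ab in auto)
qed

lemma test_fun_deriv:
  assumes "\<mu> \<in> test_fun"
  shows "deriv \<mu> \<in> test_fun"
proof -
  obtain a b where "0 < a" "a \<le> b" "b < 1" "\<And>k x. x \<notin> {a..b} \<Longrightarrow> nth_deriv k \<mu> x = 0"
    using test_fun_support[OF assms] by blast
  then show ?thesis
  proof (intro test_funI[of _ a b])
    show "nth_deriv k (deriv \<mu>) differentiable (at x)" for k x
      using test_fun_differentiable[OF assms, of "Suc k"] by (simp only: nth_deriv_Suc')
    show "deriv \<mu> x = 0" if "x \<notin> {a..b}" for x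
      using \<open>\<And>k x. x \<notin> {a..b} \<Longrightarrow> nth_deriv k \<mu> x = 0\<close>[of x 1] that
      by (simp add: nth_deriv_Suc)
  qed
qed

definition helmholtz :: "real \<Rightarrow> (real \<Rightarrow> real) \<Rightarrow> real \<Rightarrow> real" where
  "helmholtz l f = (\<lambda>x. - deriv (deriv f) x - l * f x)"

lemma test_fun_helmholtz:
  assumes "u \<in> test_fun"
  shows "helmholtz l u \<in> test_fun"
proof -
  have "(\<lambda>x. (-1) * deriv (deriv u) x + (-l) * u x) \<in> test_fun"
    by (intro test_fun_lincomb test_fun_deriv assms)
  then show ?thesis by (simp add: helmholtz_def)
qed

lemma test_fun_helmholtz_power: "u \<in> test_fun \<Longrightarrow> (helmholtz l ^^ n) u \<in> test_fun"
  by (induction n) (auto intro: test_fun_helmholtz)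

lemma integral_helmholtz_mult:
  assumes u: "u \<in> test_fun"
    and "\<And>x. (g has_real_derivative g' x) (at x)" "continuous_on {0..1} g'"
  shows "integral {0..1} (\<lambda>x. helmholtz m u x * g x)
       = integral {0..1} (\<lambda>x. deriv u x * g' x) - m * integral {0..1} (\<lambda>x. u x * g x)"
proof -
  have g: "continuous_on {0..1} g"
    using assms(2) by (auto intro!: continuous_at_imp_continuous_on DERIV_isCont)
  have d2: "deriv (deriv u) = nth_deriv 2 u" "deriv u = nth_deriv 1 u"
    by (simp_all add: nth_deriv_Suc numeral_2_eq_2)
  have "integral {0..1} (\<lambda>x. nth_deriv 2 u x * g x) = - integral {0..1} (\<lambda>x. nth_deriv 1 u x * g' x)"
    by (rule integral_by_parts_01)
      (use assms test_fun_has_derivative[OF u] in \<open>auto intro!: continuous_intros simp: numeral_2_eq_2\<close>)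
  moreover have "integral {0..1} (\<lambda>x. helmholtz m u x * g x)
      = integral {0..1} (\<lambda>x. - (nth_deriv 2 u x * g x)) - integral {0..1} (\<lambda>x. m * (u x * g x))"
    unfolding helmholtz_def d2(1)
    by (subst integral_diff[symmetric])
      (auto intro!: integrable_continuous_interval continuous_intros test_fun_continuous_on[OF u] u g
        simp: algebra_simps)
  ultimately show ?thesis by (simp add: d2)
qed

lemma L2inner_helmholtz:
  assumes "u \<in> test_fun" and "v \<in> test_fun"
  shows "L2inner (helmholtz m u) v = L2inner (deriv u) (deriv v) - m * L2inner u v"
  using integral_helmholtz_mult[OF assms(1) test_fun_has_derivative[OF assms(2), of 0]]
    continuous_on_nth_deriv[OF assms(2), of _ 1]
  by (simp add: L2inner_def nth_deriv_Suc)

lemma phi_has_derivative: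
  "(phi j has_real_derivative sqrt 2 * (real j * pi) * cos (real j * pi * x)) (at x)"
  unfolding phi_def by (auto intro!: derivative_eq_intros)

lemma phi_derivative_has_derivative:
  "((\<lambda>x. sqrt 2 * (real j * pi) * cos (real j * pi * x)) has_real_derivative - lam j * phi j x) (at x)"
  unfolding phi_def lam_def by (auto intro!: derivative_eq_intros simp: power2_eq_square)

lemma fourier_coeff_helmholtz:
  assumes u: "u \<in> test_fun"
  shows "fourier_coeff j (helmholtz l u) = (lam j - l) * fourier_coeff j u"
proof -
  define dphi where "dphi x = sqrt 2 * (real j * pi) * cos (real j * pi * x)" for x
  have "integral {0..1} (\<lambda>x. deriv u x * dphi x) = - integral {0..1} (\<lambda>x. u x * (- lam j * phi j x))"
    by (rule integral_by_parts_01) (use test_fun_has_derivative[OF u, of 0]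
        continuous_on_nth_deriv[OF u, of _ 1] test_fun_boundary[OF u, of 0]
        phi_derivative_has_derivative in \<open>auto intro!: continuous_intros simp: nth_deriv_Suc dphi_def\<close>)
  also have "\<dots> = lam j * integral {0..1} (\<lambda>x. u x * phi j x)"
    by (simp add: mult.left_commute)
  finally show ?thesis
    using integral_helmholtz_mult[OF u phi_has_derivative, of j l] unfolding fourier_coeff_def L2inner_def
    by (simp add: dphi_def continuous_intros left_diff_distrib)
qed

lemma fourier_coeff_helmholtz_power:
  "u \<in> test_fun \<Longrightarrow> fourier_coeff j ((helmholtz l ^^ n) u) = (lam j - l) ^ n * fourier_coeff j u"
  by (induction n) (simp_all add: fourier_coeff_helmholtz test_fun_helmholtz_power)

lemma parseval_test_fun:
  assumes "u \<in> test_fun" and "v \<in> test_fun"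
  shows "fourier_pairing u v = L2inner u v"
proof -
  have "continuous_on {0..1} w" "sine_approximable w" if w: "w \<in> test_fun" for w
  proof -
    show "continuous_on {0..1} w" using continuous_on_nth_deriv[OF w, of _ 0] by simp
    obtain a b where "0 < a" "b < 1" "\<And>x. x \<notin> {a..b} \<Longrightarrow> w x = 0"
      using test_fun_support[OF w] by (metis nth_deriv_0)
    moreover have "isCont w x" for x using test_fun_isCont[OF w, where k=0] by simp
    ultimately show "sine_approximable w" by (intro sine_approximable_compact_support)
  qed
  then show ?thesis using assms by (intro parseval)
qed

section \<open>Differential operators with trigonometric coefficients\<close>

definition harmonic :: "real \<Rightarrow> real \<times> real \<Rightarrow> real \<Rightarrow> real" where
  "harmonic w c x = fst c * sin (w * x) + snd c * cos (w * x)"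

definition harmonic_dcoeff :: "real \<Rightarrow> real \<times> real \<Rightarrow> real \<times> real" where
  "harmonic_dcoeff w c = (- w * snd c, w * fst c)"

lemma harmonic_has_derivative:
  "(harmonic w c has_real_derivative harmonic w (harmonic_dcoeff w c) x) (at x)"
  unfolding harmonic_def[abs_def] harmonic_dcoeff_def
  by (auto intro!: derivative_eq_intros simp: algebra_simps)

lemma continuous_on_harmonic [continuous_intros]: "continuous_on S (harmonic w c)"
  unfolding harmonic_def[abs_def] by (intro continuous_intros)

lemma harmonic_add [simp]: "harmonic w (c + d) x = harmonic w c x + harmonic w d x"
  by (simp add: harmonic_def algebra_simps)

lemma harmonic_scaleR [simp]: "harmonic w (t *\<^sub>R c) x = t * harmonic w c x"
  by (simp add: harmonic_def algebra_simps)

lemma harmonic_zero [simp]: "harmonic w 0 x = 0"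
  by (simp add: harmonic_def)

lemma harmonic_dcoeff_zero [simp]: "harmonic_dcoeff w 0 = 0"
  by (simp add: harmonic_dcoeff_def zero_prod_def)

definition trig_diffop :: "real \<Rightarrow> (nat \<Rightarrow> real \<times> real) \<Rightarrow> nat \<Rightarrow> (real \<Rightarrow> real) \<Rightarrow> real \<Rightarrow> real" where
  "trig_diffop w c N \<mu> x = (\<Sum>i\<le>N. harmonic w (c i) x * nth_deriv i \<mu> x)"

definition vanish_above :: "(nat \<Rightarrow> 'a::zero) \<Rightarrow> nat \<Rightarrow> bool" where
  "vanish_above c N \<longleftrightarrow> (\<forall>i>N. c i = 0)"

definition trig_diffop_dcoeffs :: "real \<Rightarrow> (nat \<Rightarrow> real \<times> real) \<Rightarrow> nat \<Rightarrow> real \<times> real" where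
  "trig_diffop_dcoeffs w c i = harmonic_dcoeff w (c i) + (case i of 0 \<Rightarrow> 0 | Suc k \<Rightarrow> c k)"

lemma vanish_above_dcoeffs: "vanish_above c N \<Longrightarrow> vanish_above (trig_diffop_dcoeffs w c) (Suc N)"
  unfolding vanish_above_def trig_diffop_dcoeffs_def by (auto split: nat.split)

lemma trig_diffop_dcoeffs_top: "vanish_above c N \<Longrightarrow> trig_diffop_dcoeffs w c (Suc N) = c N"
  unfolding vanish_above_def trig_diffop_dcoeffs_def by simp

lemma trig_diffop_Suc:
  "trig_diffop w c (Suc N) \<mu> x = harmonic w (c (Suc N)) x * nth_deriv (Suc N) \<mu> x + trig_diffop w c N \<mu> x"
  by (simp add: trig_diffop_def)

lemma continuous_on_trig_diffop [continuous_intros]: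
  "\<mu> \<in> test_fun \<Longrightarrow> continuous_on S (trig_diffop w c N \<mu>)"
  unfolding trig_diffop_def[abs_def] by (intro continuous_intros)

lemma trig_diffop_has_derivative:
  assumes \<mu>: "\<mu> \<in> test_fun" and c: "vanish_above c N"
  shows "(trig_diffop w c N \<mu> has_real_derivative trig_diffop w (trig_diffop_dcoeffs w c) (Suc N) \<mu> x) (at x)"
proof -
  have "(trig_diffop w c N \<mu> has_real_derivative
      (\<Sum>i\<le>N. harmonic w (harmonic_dcoeff w (c i)) x * nth_deriv i \<mu> x
              + nth_deriv (Suc i) \<mu> x * harmonic w (c i) x)) (at x)"
    unfolding trig_diffop_def[abs_def]
    by (intro DERIV_sum DERIV_mult harmonic_has_derivative test_fun_has_derivative[OF \<mu>])
  moreover have "(\<Sum>i\<le>N. nth_deriv (Suc i) \<mu> x * harmonic w (c i) x)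
      = (\<Sum>i\<le>Suc N. harmonic w (case i of 0 \<Rightarrow> 0 | Suc k \<Rightarrow> c k) x * nth_deriv i \<mu> x)"
    by (subst sum.atMost_Suc_shift) (simp add: mult.commute)
  moreover have "c (Suc N) = 0" using c by (simp add: vanish_above_def)
  ultimately show ?thesis
    by (simp add: trig_diffop_def trig_diffop_dcoeffs_def distrib_right sum.distrib)
qed

lemma deriv_trig_diffop:
  "\<mu> \<in> test_fun \<Longrightarrow> vanish_above c N \<Longrightarrow>
   deriv (trig_diffop w c N \<mu>) = trig_diffop w (trig_diffop_dcoeffs w c) (Suc N) \<mu>"
  by (rule ext) (rule DERIV_imp_deriv[OF trig_diffop_has_derivative])

lemma trig_diffop_extend:
  assumes "vanish_above c N" and "N \<le> M"
  shows "trig_diffop w c M \<mu> = trig_diffop w c N \<mu>"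
proof
  fix x
  have "trig_diffop w c M \<mu> x = (\<Sum>i\<in>{..N} \<union> {N<..M}. harmonic w (c i) x * nth_deriv i \<mu> x)"
    unfolding trig_diffop_def using assms(2) by (intro sum.cong) auto
  also have "\<dots> = trig_diffop w c N \<mu> x"
    using assms(1) by (subst sum.union_disjoint) (auto simp: trig_diffop_def vanish_above_def)
  finally show "trig_diffop w c M \<mu> x = trig_diffop w c N \<mu> x" .
qed

lemma trig_diffop_lincomb_coeffs:
  "trig_diffop w (\<lambda>i. a *\<^sub>R c i + b *\<^sub>R d i) N \<mu> x = a * trig_diffop w c N \<mu> x + b * trig_diffop w d N \<mu> x"
  by (simp add: trig_diffop_def distrib_right sum.distrib sum_distrib_left mult.assoc)

lemma trig_diffop_lincomb:
  assumes "u \<in> test_fun" and "v \<in> test_fun"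
  shows "trig_diffop w c N (\<lambda>x. a * u x + b * v x) = (\<lambda>x. a * trig_diffop w c N u x + b * trig_diffop w c N v x)"
  by (simp add: fun_eq_iff trig_diffop_def nth_deriv_lincomb[OF assms] algebra_simps
      sum.distrib sum_distrib_left)

lemma test_fun_trig_diffop:
  assumes \<mu>: "\<mu> \<in> test_fun" and c: "vanish_above c N"
  shows "trig_diffop w c N \<mu> \<in> test_fun"
proof -
  have "nth_deriv k (trig_diffop w c N \<mu>) = trig_diffop w ((trig_diffop_dcoeffs w ^^ k) c) (N + k) \<mu>
      \<and> vanish_above ((trig_diffop_dcoeffs w ^^ k) c) (N + k)" for k
  proof (induction k)
    case (Suc k)
    then show ?case by (simp add: nth_deriv_Suc deriv_trig_diffop[OF \<mu>] vanish_above_dcoeffs)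
  qed (simp add: c)
  then have "nth_deriv k (trig_diffop w c N \<mu>) differentiable (at x)" for k x
    using trig_diffop_has_derivative[OF \<mu>] real_differentiable_def by metis
  moreover obtain a b where "0 < a" "a \<le> b" "b < 1" "\<And>k x. x \<notin> {a..b} \<Longrightarrow> nth_deriv k \<mu> x = 0"
    using test_fun_support[OF \<mu>] by blast
  ultimately show ?thesis
    by (intro test_funI[of _ a b]) (auto simp: trig_diffop_def)
qed

definition helmholtz_coeffs :: "real \<Rightarrow> real \<Rightarrow> (nat \<Rightarrow> real \<times> real) \<Rightarrow> nat \<Rightarrow> real \<times> real" where
  "helmholtz_coeffs l w c i = - trig_diffop_dcoeffs w (trig_diffop_dcoeffs w c) i - l *\<^sub>R c i"

lemma helmholtz_trig_diffop:
  assumes \<mu>: "\<mu> \<in> test_fun" and c: "vanish_above c N"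
  shows "helmholtz l (trig_diffop w c N \<mu>) = trig_diffop w (helmholtz_coeffs l w c) (Suc (Suc N)) \<mu>"
proof
  fix x
  have "deriv (deriv (trig_diffop w c N \<mu>))
      = trig_diffop w (trig_diffop_dcoeffs w (trig_diffop_dcoeffs w c)) (Suc (Suc N)) \<mu>"
    using deriv_trig_diffop[OF \<mu> c] deriv_trig_diffop[OF \<mu> vanish_above_dcoeffs[OF c]] by simp
  moreover have "trig_diffop w c N \<mu> x = trig_diffop w c (Suc (Suc N)) \<mu> x"
    using trig_diffop_extend[OF c, of "Suc (Suc N)"] by simp
  ultimately show "helmholtz l (trig_diffop w c N \<mu>) x = trig_diffop w (helmholtz_coeffs l w c) (Suc (Suc N)) \<mu> x"
    using trig_diffop_lincomb_coeffs[of w "-1" "trig_diffop_dcoeffs w (trig_diffop_dcoeffs w c)" "-l" c]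
    by (simp add: helmholtz_def helmholtz_coeffs_def[abs_def])
qed

lemma vanish_above_helmholtz_coeffs:
  assumes "vanish_above c N"
  shows "vanish_above (helmholtz_coeffs l w c) (Suc (Suc N))"
proof -
  have "vanish_above (trig_diffop_dcoeffs w (trig_diffop_dcoeffs w c)) (Suc (Suc N))"
    by (intro vanish_above_dcoeffs assms)
  with assms show ?thesis by (simp add: vanish_above_def helmholtz_coeffs_def)
qed

lemma helmholtz_coeffs_top:
  assumes "vanish_above c N"
  shows "helmholtz_coeffs l w c (Suc (Suc N)) = - c N"
proof -
  have "trig_diffop_dcoeffs w (trig_diffop_dcoeffs w c) (Suc (Suc N)) = c N"
    using trig_diffop_dcoeffs_top[OF vanish_above_dcoeffs[OF assms]] trig_diffop_dcoeffs_top[OF assms]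
    by simp
  moreover have "c (Suc (Suc N)) = 0" using assms by (simp add: vanish_above_def)
  ultimately show ?thesis by (simp add: helmholtz_coeffs_def)
qed

lemma helmholtz_power_trig_diffop:
  "\<exists>c. vanish_above c (2 * n) \<and> c (2 * n) = (-1) ^ n *\<^sub>R c0 \<and>
     (\<forall>\<mu>\<in>test_fun. (helmholtz l ^^ n) (trig_diffop w (\<lambda>i. if i = 0 then c0 else 0) 0 \<mu>)
                   = trig_diffop w c (2 * n) \<mu>)"
proof (induction n)
  case 0
  show ?case by (intro exI[of _ "\<lambda>i. if i = 0 then c0 else 0"]) (simp add: vanish_above_def)
next
  case (Suc n)
  then obtain c where c: "vanish_above c (2 * n)" "c (2 * n) = (-1) ^ n *\<^sub>R c0"
    "\<forall>\<mu>\<in>test_fun. (helmholtz l ^^ n) (trig_diffop w (\<lambda>i. if i = 0 then c0 else 0) 0 \<mu>)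
                   = trig_diffop w c (2 * n) \<mu>" by blast
  have e: "2 * Suc n = Suc (Suc (2 * n))" by simp
  show ?case
  proof (intro exI[of _ "helmholtz_coeffs l w c"] conjI ballI)
    show "vanish_above (helmholtz_coeffs l w c) (2 * Suc n)"
      unfolding e by (rule vanish_above_helmholtz_coeffs[OF c(1)])
    show "helmholtz_coeffs l w c (2 * Suc n) = (-1) ^ Suc n *\<^sub>R c0"
      unfolding e helmholtz_coeffs_top[OF c(1)] c(2) by simp
    fix \<mu> assume "\<mu> \<in> test_fun"
    then show "(helmholtz l ^^ Suc n) (trig_diffop w (\<lambda>i. if i = 0 then c0 else 0) 0 \<mu>)
        = trig_diffop w (helmholtz_coeffs l w c) (2 * Suc n) \<mu>"
      unfolding e using c(3) helmholtz_trig_diffop[OF _ c(1)] by simp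
  qed
qed

lemma mult_phi_eq_trig_diffop:
  "(\<lambda>x. \<mu> x * phi j x) = trig_diffop (real j * pi) (\<lambda>i. if i = 0 then (sqrt 2, 0) else 0) 0 \<mu>"
  by (simp add: fun_eq_iff trig_diffop_def harmonic_def phi_def mult_ac)

lemma helmholtz_power_mult_phi:
  "\<exists>c. vanish_above c (2 * n) \<and> c (2 * n) = ((-1) ^ n * sqrt 2, 0) \<and>
     (\<forall>\<mu>\<in>test_fun. (helmholtz l ^^ n) (\<lambda>x. \<mu> x * phi j x) = trig_diffop (real j * pi) c (2 * n) \<mu>)"
  using helmholtz_power_trig_diffop[of n "(sqrt 2, 0)"] by (simp add: mult_phi_eq_trig_diffop)

lemma test_fun_mult_phi:
  assumes "\<mu> \<in> test_fun"
  shows "(\<lambda>x. \<mu> x * phi j x) \<in> test_fun"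
  unfolding mult_phi_eq_trig_diffop
  by (intro test_fun_trig_diffop assms) (simp add: vanish_above_def)

section \<open>Bounds by the \<open>H\<^sup>N\<close> norm\<close>

definition dominated_by_Hnorm :: "nat \<Rightarrow> ((real \<Rightarrow> real) \<Rightarrow> real) \<Rightarrow> bool" where
  "dominated_by_Hnorm N F \<longleftrightarrow> (\<exists>C. \<forall>\<mu>\<in>test_fun. \<bar>F \<mu>\<bar> \<le> C * Hnorm_sq N \<mu>)"

lemma integral_nth_deriv_sq_nonneg:
  "\<mu> \<in> test_fun \<Longrightarrow> 0 \<le> integral {0..1} (\<lambda>x. nth_deriv k \<mu> x * nth_deriv k \<mu> x)"
  by (intro integral_nonneg integrable_continuous_interval continuous_intros) auto

lemma integral_nth_deriv_sq_le_Hnorm_sq: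
  assumes "\<mu> \<in> test_fun" and "i \<le> N"
  shows "integral {0..1} (\<lambda>x. nth_deriv i \<mu> x * nth_deriv i \<mu> x) \<le> Hnorm_sq N \<mu>"
  unfolding Hnorm_sq_def
  using member_le_sum[of i "{..N}" "\<lambda>k. integral {0..1} (\<lambda>x. nth_deriv k \<mu> x * nth_deriv k \<mu> x)"]
    integral_nth_deriv_sq_nonneg[OF assms(1)] assms(2)
  by (simp add: nth_deriv_def power2_eq_square)

lemma Hnorm_sq_nonneg: "\<mu> \<in> test_fun \<Longrightarrow> 0 \<le> Hnorm_sq N \<mu>"
  using integral_nth_deriv_sq_le_Hnorm_sq[of \<mu> 0 N] integral_nth_deriv_sq_nonneg[of \<mu> 0] by simp

lemma dominated_by_Hnorm_cong:
  "(\<And>\<mu>. \<mu> \<in> test_fun \<Longrightarrow> F \<mu> = G \<mu>) \<Longrightarrow> dominated_by_Hnorm N G \<Longrightarrow> dominated_by_Hnorm N F"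
  unfolding dominated_by_Hnorm_def by simp

lemma dominated_by_Hnorm_lincomb:
  assumes "dominated_by_Hnorm N F" and "dominated_by_Hnorm N G"
  shows "dominated_by_Hnorm N (\<lambda>\<mu>. a * F \<mu> + b * G \<mu>)"
proof -
  obtain C D where C: "\<forall>\<mu>\<in>test_fun. \<bar>F \<mu>\<bar> \<le> C * Hnorm_sq N \<mu>"
    and D: "\<forall>\<mu>\<in>test_fun. \<bar>G \<mu>\<bar> \<le> D * Hnorm_sq N \<mu>"
    using assms unfolding dominated_by_Hnorm_def by blast
  have "\<bar>a * F \<mu> + b * G \<mu>\<bar> \<le> (\<bar>a\<bar> * C + \<bar>b\<bar> * D) * Hnorm_sq N \<mu>" if "\<mu> \<in> test_fun" for \<mu>
  proof -
    have "\<bar>a * F \<mu> + b * G \<mu>\<bar> \<le> \<bar>a\<bar> * \<bar>F \<mu>\<bar> + \<bar>b\<bar> * \<bar>G \<mu>\<bar>"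
      by (metis abs_mult abs_triangle_ineq)
    also have "\<dots> \<le> \<bar>a\<bar> * (C * Hnorm_sq N \<mu>) + \<bar>b\<bar> * (D * Hnorm_sq N \<mu>)"
      using C D that by (intro add_mono mult_left_mono) auto
    finally show ?thesis by (simp add: algebra_simps)
  qed
  then show ?thesis unfolding dominated_by_Hnorm_def by blast
qed

lemma dominated_by_Hnorm_sum:
  assumes "finite S" and "\<And>s. s \<in> S \<Longrightarrow> dominated_by_Hnorm N (F s)"
  shows "dominated_by_Hnorm N (\<lambda>\<mu>. \<Sum>s\<in>S. F s \<mu>)"
  using assms
proof (induction S rule: finite_induct)
  case empty
  show ?case unfolding dominated_by_Hnorm_def by (intro exI[of _ 0]) simp
next
  case (insert s S)
  then show ?case
    using dominated_by_Hnorm_lincomb[of N "F s" "\<lambda>\<mu>. \<Sum>s\<in>S. F s \<mu>" 1 1] by simp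
qed

lemma dominated_by_Hnorm_imp_pos_constant:
  assumes "dominated_by_Hnorm N F"
  obtains C where "C > 0" "\<And>\<mu>. \<mu> \<in> test_fun \<Longrightarrow> \<bar>F \<mu>\<bar> \<le> C * Hnorm_sq N \<mu>"
proof -
  obtain C where C: "\<forall>\<mu>\<in>test_fun. \<bar>F \<mu>\<bar> \<le> C * Hnorm_sq N \<mu>"
    using assms unfolding dominated_by_Hnorm_def by blast
  have "\<bar>F \<mu>\<bar> \<le> (\<bar>C\<bar> + 1) * Hnorm_sq N \<mu>" if "\<mu> \<in> test_fun" for \<mu>
  proof -
    have "C * Hnorm_sq N \<mu> \<le> (\<bar>C\<bar> + 1) * Hnorm_sq N \<mu>"
      using Hnorm_sq_nonneg[OF that] by (intro mult_right_mono) auto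
    then show ?thesis using C that by fastforce
  qed
  then show ?thesis using that[of "\<bar>C\<bar> + 1"] by simp
qed

lemma dominated_weighted_product:
  assumes W: "continuous_on {0..1} W" and "i \<le> N" "k \<le> N"
  shows "dominated_by_Hnorm N (\<lambda>\<mu>. integral {0..1} (\<lambda>x. W x * nth_deriv i \<mu> x * nth_deriv k \<mu> x))"
proof -
  obtain M where M: "\<And>x. x \<in> {0..1} \<Longrightarrow> \<bar>W x\<bar> \<le> M"
    using continuous_on_compact_bound[OF compact_Icc W] by (metis real_norm_def)
  then have M0: "0 \<le> M" by (meson abs_ge_zero atLeastAtMost_iff order_trans zero_le_one order.refl)
  have "\<bar>integral {0..1} (\<lambda>x. W x * nth_deriv i \<mu> x * nth_deriv k \<mu> x)\<bar> \<le> M * Hnorm_sq N \<mu>"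
    if \<mu>: "\<mu> \<in> test_fun" for \<mu>
  proof -
    define G where "G x = M / 2 * (nth_deriv i \<mu> x * nth_deriv i \<mu> x + nth_deriv k \<mu> x * nth_deriv k \<mu> x)" for x
    have pt: "\<bar>W x * nth_deriv i \<mu> x * nth_deriv k \<mu> x\<bar> \<le> G x" if "x \<in> {0..1}" for x
    proof -
      have "\<bar>W x * nth_deriv i \<mu> x * nth_deriv k \<mu> x\<bar> \<le> M * \<bar>nth_deriv i \<mu> x * nth_deriv k \<mu> x\<bar>"
        using M[OF that] by (simp add: abs_mult mult_right_mono flip: mult.assoc)
      also have "\<dots> \<le> G x"
      proof -
        have "\<bar>nth_deriv i \<mu> x * nth_deriv k \<mu> x\<bar>
            \<le> (nth_deriv i \<mu> x * nth_deriv i \<mu> x + nth_deriv k \<mu> x * nth_deriv k \<mu> x) / 2"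
          using sum_squares_bound[of "\<bar>nth_deriv i \<mu> x\<bar>" "\<bar>nth_deriv k \<mu> x\<bar>"]
          by (simp add: abs_mult power2_eq_square)
        then show ?thesis unfolding G_def using M0
          by (metis mult_left_mono times_divide_eq_left times_divide_eq_right)
      qed
      finally show ?thesis .
    qed
    have "norm (integral {0..1} (\<lambda>x. W x * nth_deriv i \<mu> x * nth_deriv k \<mu> x)) \<le> integral {0..1} G"
    proof (rule integral_norm_bound_integral)
      show "(\<lambda>x. W x * nth_deriv i \<mu> x * nth_deriv k \<mu> x) integrable_on {0..1}" "G integrable_on {0..1}"
        unfolding G_def by (intro integrable_continuous_interval continuous_intros W \<mu>)+
    qed (use pt in simp)
    then have "\<bar>integral {0..1} (\<lambda>x. W x * nth_deriv i \<mu> x * nth_deriv k \<mu> x)\<bar> \<le> integral {0..1} G"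
      by simp
    also have "integral {0..1} G = M / 2 * (integral {0..1} (\<lambda>x. nth_deriv i \<mu> x * nth_deriv i \<mu> x)
        + integral {0..1} (\<lambda>x. nth_deriv k \<mu> x * nth_deriv k \<mu> x))"
      unfolding G_def by (simp add: integral_add integrable_continuous_interval continuous_intros \<mu>)
    also have "\<dots> \<le> M / 2 * (Hnorm_sq N \<mu> + Hnorm_sq N \<mu>)"
      using integral_nth_deriv_sq_le_Hnorm_sq[OF \<mu>] assms(2,3) M[of 0]
      by (intro mult_left_mono add_mono) auto
    finally show ?thesis by simp
  qed
  then show ?thesis unfolding dominated_by_Hnorm_def by blast
qed

text \<open>One integration by parts moves a derivative off the factor of order \<open>N + 1\<close>.\<close>

lemma dominated_weighted_top_product:
  assumes W: "\<And>x. (W has_real_derivative W' x) (at x)" and W': "continuous_on {0..1} W'"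
    and "i \<le> N"
  shows "dominated_by_Hnorm N (\<lambda>\<mu>. integral {0..1} (\<lambda>x. W x * nth_deriv (Suc N) \<mu> x * nth_deriv i \<mu> x))"
proof -
  have cW: "continuous_on {0..1} W"
    using W by (auto intro!: continuous_at_imp_continuous_on DERIV_isCont)
  have parts: "integral {0..1} (\<lambda>x. W x * nth_deriv (Suc N) \<mu> x * nth_deriv i \<mu> x)
      = - integral {0..1} (\<lambda>x. W' x * nth_deriv N \<mu> x * nth_deriv i \<mu> x)
        - integral {0..1} (\<lambda>x. W x * nth_deriv N \<mu> x * nth_deriv (Suc i) \<mu> x)"
    if \<mu>: "\<mu> \<in> test_fun" for \<mu>
  proof -
    have "integral {0..1} (\<lambda>x. nth_deriv (Suc N) \<mu> x * (W x * nth_deriv i \<mu> x))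
        = - integral {0..1} (\<lambda>x. nth_deriv N \<mu> x *
              (W' x * nth_deriv i \<mu> x + nth_deriv (Suc i) \<mu> x * W x))"
      by (rule integral_by_parts_01)
        (auto intro!: DERIV_mult W test_fun_has_derivative \<mu> continuous_intros cW W'
          simp: test_fun_boundary[OF \<mu>])
    then show ?thesis
      by (simp add: algebra_simps integral_add integrable_continuous_interval continuous_intros \<mu> cW W')
  qed
  show ?thesis
  proof (cases "i = N")
    case True
    have "integral {0..1} (\<lambda>x. W x * nth_deriv (Suc N) \<mu> x * nth_deriv i \<mu> x)
        = (-1/2) * integral {0..1} (\<lambda>x. W' x * nth_deriv N \<mu> x * nth_deriv N \<mu> x)"
      if "\<mu> \<in> test_fun" for \<mu>
      using parts[OF that] True by (simp add: mult_ac)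
    with True show ?thesis
      using dominated_by_Hnorm_lincomb[OF dominated_weighted_product[OF W' order.refl order.refl]
          dominated_weighted_product[OF W' order.refl order.refl], where a = "-1/2" and b = 0]
      by (auto intro: dominated_by_Hnorm_cong)
  next
    case False
    with \<open>i \<le> N\<close> show ?thesis
      using dominated_by_Hnorm_lincomb[OF dominated_weighted_product[OF W' order.refl \<open>i \<le> N\<close>]
          dominated_weighted_product[OF cW order.refl, of "Suc i"], where a = "-1" and b = "-1"]
      by (auto intro: dominated_by_Hnorm_cong parts)
  qed
qed

lemma integral_trig_diffop_mult:
  assumes "\<mu> \<in> test_fun" and "continuous_on {0..1} G"
  shows "integral {0..1} (\<lambda>x. trig_diffop w a N \<mu> x * G x)
       = (\<Sum>i\<le>N. integral {0..1} (\<lambda>x. harmonic w (a i) x * nth_deriv i \<mu> x * G x))"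
  unfolding trig_diffop_def sum_distrib_right
  by (rule integral_sum) (auto intro!: integrable_continuous_interval continuous_intros assms)

lemma integral_mult_trig_diffop:
  assumes "\<mu> \<in> test_fun" and "continuous_on {0..1} G"
  shows "integral {0..1} (\<lambda>x. G x * trig_diffop w a N \<mu> x)
       = (\<Sum>i\<le>N. integral {0..1} (\<lambda>x. G x * (harmonic w (a i) x * nth_deriv i \<mu> x)))"
  unfolding trig_diffop_def sum_distrib_left
  by (rule integral_sum) (auto intro!: integrable_continuous_interval continuous_intros assms)

lemma dominated_trig_diffop_product:
  "dominated_by_Hnorm N (\<lambda>\<mu>. integral {0..1} (\<lambda>x. trig_diffop w1 a N \<mu> x * trig_diffop w2 b N \<mu> x))"
proof (rule dominated_by_Hnorm_cong)
  fix \<mu> :: "real \<Rightarrow> real" assume \<mu>: "\<mu> \<in> test_fun"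
  have "integral {0..1} (\<lambda>x. trig_diffop w1 a N \<mu> x * trig_diffop w2 b N \<mu> x)
      = (\<Sum>i\<le>N. integral {0..1} (\<lambda>x. harmonic w1 (a i) x * nth_deriv i \<mu> x * trig_diffop w2 b N \<mu> x))"
    by (intro integral_trig_diffop_mult \<mu> continuous_intros)
  also have "\<dots> = (\<Sum>i\<le>N. \<Sum>k\<le>N. integral {0..1}
      (\<lambda>x. harmonic w1 (a i) x * nth_deriv i \<mu> x * (harmonic w2 (b k) x * nth_deriv k \<mu> x)))"
    by (intro sum.cong refl integral_mult_trig_diffop \<mu> continuous_intros)
  finally show "integral {0..1} (\<lambda>x. trig_diffop w1 a N \<mu> x * trig_diffop w2 b N \<mu> x)
      = (\<Sum>i\<le>N. \<Sum>k\<le>N. integral {0..1}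
          (\<lambda>x. (harmonic w1 (a i) x * harmonic w2 (b k) x) * nth_deriv i \<mu> x * nth_deriv k \<mu> x))"
    by (simp add: mult_ac)
next
  show "dominated_by_Hnorm N (\<lambda>\<mu>. \<Sum>i\<le>N. \<Sum>k\<le>N. integral {0..1}
      (\<lambda>x. (harmonic w1 (a i) x * harmonic w2 (b k) x) * nth_deriv i \<mu> x * nth_deriv k \<mu> x))"
    by (intro dominated_by_Hnorm_sum dominated_weighted_product continuous_intros finite_atMost) auto
qed

lemma dominated_top_trig_diffop_product:
  "dominated_by_Hnorm N (\<lambda>\<mu>. integral {0..1} (\<lambda>x. harmonic w1 c x * nth_deriv (Suc N) \<mu> x * trig_diffop w2 b N \<mu> x))"
proof (rule dominated_by_Hnorm_cong)
  fix \<mu> :: "real \<Rightarrow> real" assume \<mu>: "\<mu> \<in> test_fun"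
  have "integral {0..1} (\<lambda>x. harmonic w1 c x * nth_deriv (Suc N) \<mu> x * trig_diffop w2 b N \<mu> x)
      = (\<Sum>k\<le>N. integral {0..1}
          (\<lambda>x. harmonic w1 c x * nth_deriv (Suc N) \<mu> x * (harmonic w2 (b k) x * nth_deriv k \<mu> x)))"
    by (intro integral_mult_trig_diffop \<mu> continuous_intros)
  then show "integral {0..1} (\<lambda>x. harmonic w1 c x * nth_deriv (Suc N) \<mu> x * trig_diffop w2 b N \<mu> x)
      = (\<Sum>k\<le>N. integral {0..1}
          (\<lambda>x. (harmonic w1 c x * harmonic w2 (b k) x) * nth_deriv (Suc N) \<mu> x * nth_deriv k \<mu> x))"
    by (simp add: mult_ac)
next
  have "((\<lambda>x. harmonic w1 c x * harmonic w2 (b k) x) has_real_derivative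
      harmonic w1 (harmonic_dcoeff w1 c) x * harmonic w2 (b k) x
      + harmonic w2 (harmonic_dcoeff w2 (b k)) x * harmonic w1 c x) (at x)" for k x
    by (intro DERIV_mult harmonic_has_derivative)
  then show "dominated_by_Hnorm N (\<lambda>\<mu>. \<Sum>k\<le>N. integral {0..1}
      (\<lambda>x. (harmonic w1 c x * harmonic w2 (b k) x) * nth_deriv (Suc N) \<mu> x * nth_deriv k \<mu> x))"
    by (intro dominated_by_Hnorm_sum dominated_weighted_top_product finite_atMost)
      (auto intro!: continuous_intros)
qed

section \<open>The principal part\<close>

lemma quadratic_form_on_cong:
  "(\<And>u. u \<in> S \<Longrightarrow> Q u = Q' u) \<Longrightarrow> quadratic_form_on S Q' \<Longrightarrow> quadratic_form_on S Q"
  unfolding quadratic_form_on_def by simp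

lemma quadratic_form_on_lincomb:
  assumes "quadratic_form_on S Q1" and "quadratic_form_on S Q2"
  shows "quadratic_form_on S (\<lambda>u. a * Q1 u + b * Q2 u)"
proof -
  obtain B1 B2 where B1: "\<forall>u\<in>S. Q1 u = B1 u u" "\<forall>u\<in>S. \<forall>v\<in>S. \<forall>w\<in>S. \<forall>a b::real.
        B1 (\<lambda>x. a * u x + b * v x) w = a * B1 u w + b * B1 v w \<and>
        B1 w (\<lambda>x. a * u x + b * v x) = a * B1 w u + b * B1 w v"
    and B2: "\<forall>u\<in>S. Q2 u = B2 u u" "\<forall>u\<in>S. \<forall>v\<in>S. \<forall>w\<in>S. \<forall>a b::real.
        B2 (\<lambda>x. a * u x + b * v x) w = a * B2 u w + b * B2 v w \<and>
        B2 w (\<lambda>x. a * u x + b * v x) = a * B2 w u + b * B2 w v"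
    using assms unfolding quadratic_form_on_def by blast
  show ?thesis
    unfolding quadratic_form_on_def
    by (rule exI[of _ "\<lambda>u v. a * B1 u v + b * B2 u v"]) (simp add: B1 B2 algebra_simps)
qed

lemma quadratic_form_on_integral_product:
  fixes F G :: "(real \<Rightarrow> real) \<Rightarrow> real \<Rightarrow> real"
  assumes F: "\<And>u v a b. u \<in> S \<Longrightarrow> v \<in> S \<Longrightarrow> F (\<lambda>x. a * u x + b * v x) = (\<lambda>x. a * F u x + b * F v x)"
    and G: "\<And>u v a b. u \<in> S \<Longrightarrow> v \<in> S \<Longrightarrow> G (\<lambda>x. a * u x + b * v x) = (\<lambda>x. a * G u x + b * G v x)"
    and cF: "\<And>u. u \<in> S \<Longrightarrow> continuous_on {0..1} (F u)"
    and cG: "\<And>u. u \<in> S \<Longrightarrow> continuous_on {0..1} (G u)"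
  shows "quadratic_form_on S (\<lambda>u. integral {0..1} (\<lambda>x. F u x * G u x))"
proof -
  have i: "(\<lambda>x. c * (F u x * G w x)) integrable_on {0..1}" if "u \<in> S" "w \<in> S" for u w c
    by (intro integrable_continuous_interval continuous_intros cF cG that)
  show ?thesis
    unfolding quadratic_form_on_def
    by (rule exI[of _ "\<lambda>u v. integral {0..1} (\<lambda>x. F u x * G v x)"])
      (simp add: F G algebra_simps integral_add i flip: integral_mult_right)
qed

lemma quadratic_form_on_trig_diffop_product:
  "quadratic_form_on test_fun (\<lambda>\<mu>. integral {0..1} (\<lambda>x. trig_diffop w1 a N \<mu> x * trig_diffop w2 b M \<mu> x))"
  by (intro quadratic_form_on_integral_product) (simp_all add: trig_diffop_lincomb continuous_intros)

lemma quadratic_form_on_weighted_nth_deriv_sq: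
  assumes "continuous_on {0..1} W"
  shows "quadratic_form_on test_fun (\<lambda>\<mu>. integral {0..1} (\<lambda>x. W x * nth_deriv k \<mu> x * nth_deriv k \<mu> x))"
  by (intro quadratic_form_on_integral_product)
    (simp_all add: nth_deriv_lincomb fun_eq_iff algebra_simps continuous_intros assms)

lemma integral_deriv_trig_diffop_product_split:
  fixes w1 w2 :: real
  assumes \<mu>: "\<mu> \<in> test_fun" and a: "vanish_above a N" and b: "vanish_above b N"
  defines "R1 \<equiv> trig_diffop w1 (trig_diffop_dcoeffs w1 a) N \<mu>"
    and "R2 \<equiv> trig_diffop w2 (trig_diffop_dcoeffs w2 b) N \<mu>"
  shows "integral {0..1} (\<lambda>x. trig_diffop w1 (trig_diffop_dcoeffs w1 a) (Suc N) \<mu> x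
                              * trig_diffop w2 (trig_diffop_dcoeffs w2 b) (Suc N) \<mu> x)
    = integral {0..1} (\<lambda>x. harmonic w1 (a N) x * harmonic w2 (b N) x * nth_deriv (Suc N) \<mu> x ^ 2)
      + integral {0..1} (\<lambda>x. harmonic w1 (a N) x * nth_deriv (Suc N) \<mu> x * R2 x)
      + integral {0..1} (\<lambda>x. harmonic w2 (b N) x * nth_deriv (Suc N) \<mu> x * R1 x)
      + integral {0..1} (\<lambda>x. R1 x * R2 x)"
proof -
  define T1 where "T1 x = harmonic w1 (a N) x * nth_deriv (Suc N) \<mu> x" for x
  define T2 where "T2 x = harmonic w2 (b N) x * nth_deriv (Suc N) \<mu> x" for x
  have "trig_diffop w1 (trig_diffop_dcoeffs w1 a) (Suc N) \<mu> = (\<lambda>x. T1 x + R1 x)"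
    "trig_diffop w2 (trig_diffop_dcoeffs w2 b) (Suc N) \<mu> = (\<lambda>x. T2 x + R2 x)"
    by (simp_all add: fun_eq_iff a b trig_diffop_Suc trig_diffop_dcoeffs_top T1_def T2_def R1_def R2_def)
  moreover have cont: "continuous_on {0..1} T1" "continuous_on {0..1} T2"
    "continuous_on {0..1} R1" "continuous_on {0..1} R2"
    unfolding T1_def T2_def R1_def R2_def by (intro continuous_intros \<mu>)+
  moreover have "L2inner (\<lambda>x. T1 x + R1 x) (\<lambda>x. T2 x + R2 x)
      = L2inner T1 T2 + L2inner T1 R2 + L2inner R1 T2 + L2inner R1 R2"
    using L2inner_add_left[OF cont(1,3), of "\<lambda>x. T2 x + R2 x"]
      L2inner_add_right[OF cont(2,4,1)] L2inner_add_right[OF cont(2,4,3)]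
    by (simp add: continuous_on_add cont)
  ultimately show ?thesis
    by (simp add: L2inner_def T1_def T2_def power2_eq_square mult_ac)
qed

lemma energy_trig_diffop_principal_part:
  fixes w1 w2 m :: real
  assumes a: "vanish_above a N" and b: "vanish_above b N"
  obtains C Q where "C > 0" and "quadratic_form_on test_fun Q"
    and "\<And>\<mu>. \<mu> \<in> test_fun \<Longrightarrow>
      L2inner (deriv (trig_diffop w1 a N \<mu>)) (deriv (trig_diffop w2 b N \<mu>))
        - m * L2inner (trig_diffop w1 a N \<mu>) (trig_diffop w2 b N \<mu>)
      = integral {0..1} (\<lambda>x. harmonic w1 (a N) x * harmonic w2 (b N) x * nth_deriv (Suc N) \<mu> x ^ 2) + Q \<mu>"
    and "\<And>\<mu>. \<mu> \<in> test_fun \<Longrightarrow> \<bar>Q \<mu>\<bar> \<le> C * Hnorm_sq N \<mu>"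
proof -
  define da where "da = trig_diffop_dcoeffs w1 a"
  define db where "db = trig_diffop_dcoeffs w2 b"
  define W where "W x = harmonic w1 (a N) x * harmonic w2 (b N) x" for x
  have cW: "continuous_on {0..1} W" unfolding W_def by (intro continuous_intros)
  define Q where "Q \<mu> = integral {0..1} (\<lambda>x. trig_diffop w1 da (Suc N) \<mu> x * trig_diffop w2 db (Suc N) \<mu> x)
      - m * integral {0..1} (\<lambda>x. trig_diffop w1 a N \<mu> x * trig_diffop w2 b N \<mu> x)
      - integral {0..1} (\<lambda>x. W x * nth_deriv (Suc N) \<mu> x * nth_deriv (Suc N) \<mu> x)" for \<mu>
  have energy: "L2inner (deriv (trig_diffop w1 a N \<mu>)) (deriv (trig_diffop w2 b N \<mu>))
      - m * L2inner (trig_diffop w1 a N \<mu>) (trig_diffop w2 b N \<mu>)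
    = integral {0..1} (\<lambda>x. W x * nth_deriv (Suc N) \<mu> x ^ 2) + Q \<mu>" if "\<mu> \<in> test_fun" for \<mu>
    by (simp add: Q_def L2inner_def deriv_trig_diffop[OF that] a b da_def db_def power2_eq_square mult.assoc)
  have "quadratic_form_on test_fun
      (\<lambda>\<mu>. 1 * integral {0..1} (\<lambda>x. trig_diffop w1 da (Suc N) \<mu> x * trig_diffop w2 db (Suc N) \<mu> x)
        + (-1) * (m * integral {0..1} (\<lambda>x. trig_diffop w1 a N \<mu> x * trig_diffop w2 b N \<mu> x)
          + 1 * integral {0..1} (\<lambda>x. W x * nth_deriv (Suc N) \<mu> x * nth_deriv (Suc N) \<mu> x)))"
    by (intro quadratic_form_on_lincomb quadratic_form_on_trig_diffop_product
        quadratic_form_on_weighted_nth_deriv_sq cW)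
  then have "quadratic_form_on test_fun Q"
    by (rule quadratic_form_on_cong[rotated]) (simp add: Q_def)
  moreover have "dominated_by_Hnorm N Q"
  proof (rule dominated_by_Hnorm_cong)
    fix \<mu> :: "real \<Rightarrow> real" assume \<mu>: "\<mu> \<in> test_fun"
    show "Q \<mu> = 1 * (1 * integral {0..1} (\<lambda>x. harmonic w1 (a N) x * nth_deriv (Suc N) \<mu> x * trig_diffop w2 db N \<mu> x)
        + 1 * integral {0..1} (\<lambda>x. harmonic w2 (b N) x * nth_deriv (Suc N) \<mu> x * trig_diffop w1 da N \<mu> x))
      + 1 * (1 * integral {0..1} (\<lambda>x. trig_diffop w1 da N \<mu> x * trig_diffop w2 db N \<mu> x)
        + (-m) * integral {0..1} (\<lambda>x. trig_diffop w1 a N \<mu> x * trig_diffop w2 b N \<mu> x))"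
      using integral_deriv_trig_diffop_product_split[OF \<mu> a b, of w1 w2]
      by (simp add: Q_def da_def db_def W_def power2_eq_square mult.assoc)
  qed (intro dominated_by_Hnorm_lincomb dominated_top_trig_diffop_product dominated_trig_diffop_product)
  then obtain C where "C > 0" "\<And>\<mu>. \<mu> \<in> test_fun \<Longrightarrow> \<bar>Q \<mu>\<bar> \<le> C * Hnorm_sq N \<mu>"
    using dominated_by_Hnorm_imp_pos_constant by blast
  ultimately show ?thesis using that energy unfolding W_def by blast
qed

lemma AKp_eq_energy:
  fixes K p :: nat
  assumes "p \<ge> 1" and \<mu>: "\<mu> \<in> test_fun"
  defines "U \<equiv> (helmholtz (lam 1) ^^ (p - 1)) (\<lambda>x. \<mu> x * phi 1 x)"
    and "V \<equiv> (helmholtz (lam K) ^^ (p - 1)) (\<lambda>x. \<mu> x * phi K x)"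
  shows "AKp p K \<mu> = L2inner (deriv U) (deriv V) - (lam 1 + lam K) / 2 * L2inner U V"
proof -
  define n where "n = p - 1"
  define m where "m = (lam 1 + lam K) / 2"
  have U: "U \<in> test_fun" and V: "V \<in> test_fun"
    unfolding U_def V_def by (intro test_fun_helmholtz_power test_fun_mult_phi \<mu>)+
  define Y where "Y i = fourier_coeff (Suc i) (helmholtz m U) * fourier_coeff (Suc i) V" for i
  have "(let j = Suc i in (lam j - (lam 1 + lam K) / 2) * (lam K - lam j) ^ (p - 1)
          * (lam j - lam 1) ^ (p - 1) * cc K j \<mu>) = (-1) ^ n * Y i" for i
  proof -
    have "(lam K - lam (Suc i)) ^ n = (-1) ^ n * (lam (Suc i) - lam K) ^ n"
      by (simp flip: power_mult_distrib)
    moreover have "fourier_coeff j (helmholtz m U)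
        = (lam j - m) * (lam j - lam 1) ^ n * fourier_coeff j (\<lambda>x. \<mu> x * phi 1 x)"
      "fourier_coeff j V = (lam j - lam K) ^ n * fourier_coeff j (\<lambda>x. \<mu> x * phi K x)" for j
      unfolding U_def V_def n_def
      by (simp_all add: fourier_coeff_helmholtz fourier_coeff_helmholtz_power test_fun_helmholtz_power
          test_fun_mult_phi \<mu>)
    ultimately show ?thesis
      unfolding Y_def Let_def cc_def fourier_coeff_def[symmetric] n_def[symmetric] m_def[symmetric]
      by (simp add: mult_ac)
  qed
  then have "AKp p K \<mu> = (-1) ^ n * (\<Sum>i. (-1) ^ n * Y i)"
    by (simp add: AKp_def n_def)
  also have "\<dots> = (\<Sum>i. Y i)"
    using suminf_mult[OF summable_fourier_coeff_product, of "helmholtz m U" V "(-1) ^ n"]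
    by (simp add: Y_def test_fun_continuous_on test_fun_helmholtz U V flip: power_mult_distrib mult.assoc)
  also have "\<dots> = L2inner (helmholtz m U) V"
    using parseval_test_fun[OF test_fun_helmholtz[OF U] V] by (simp add: fourier_pairing_def Y_def)
  finally show ?thesis by (simp add: L2inner_helmholtz U V m_def)
qed

lemma harmonic_phi_coeff:
  "harmonic (real j * pi) ((-1) ^ n * sqrt 2, 0) x * harmonic (real k * pi) ((-1) ^ n * sqrt 2, 0) x
    = phi j x * phi k x"
proof -
  have "((-1::real) ^ n * sqrt 2) * ((-1) ^ n * sqrt 2) = 2"
    by (simp add: mult_ac flip: power_mult_distrib)
  then show ?thesis by (simp add: harmonic_def phi_def algebra_simps)
qed

theorem propositionA3:
  fixes K p :: nat
  assumes "K \<ge> 1" and "p \<ge> 1"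
  shows "\<exists>C>0. \<exists>Q. quadratic_form_on test_fun Q \<and>
           (\<forall>\<mu>\<in>test_fun.
              AKp p K \<mu> = L2inner (\<lambda>x. ((deriv ^^ (2*p-1)) \<mu> x)^2 * phi 1 x) (phi K) + Q \<mu> \<and>
              \<bar>Q \<mu>\<bar> \<le> C * Hnorm_sq (2*p-2) \<mu>)"
proof -
  define n where "n = p - 1"
  have N: "2 * p - 1 = Suc (2 * n)" "2 * p - 2 = 2 * n" using assms(2) by (auto simp: n_def)
  obtain cU where cU: "vanish_above cU (2 * n)" "cU (2 * n) = ((-1) ^ n * sqrt 2, 0)"
    "\<forall>\<mu>\<in>test_fun. (helmholtz (lam 1) ^^ n) (\<lambda>x. \<mu> x * phi 1 x) = trig_diffop (real 1 * pi) cU (2 * n) \<mu>"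
    using helmholtz_power_mult_phi by blast
  obtain cV where cV: "vanish_above cV (2 * n)" "cV (2 * n) = ((-1) ^ n * sqrt 2, 0)"
    "\<forall>\<mu>\<in>test_fun. (helmholtz (lam K) ^^ n) (\<lambda>x. \<mu> x * phi K x) = trig_diffop (real K * pi) cV (2 * n) \<mu>"
    using helmholtz_power_mult_phi by blast
  obtain C Q where "C > 0" "quadratic_form_on test_fun Q"
    and energy: "\<And>\<mu>. \<mu> \<in> test_fun \<Longrightarrow>
      L2inner (deriv (trig_diffop (real 1 * pi) cU (2 * n) \<mu>)) (deriv (trig_diffop (real K * pi) cV (2 * n) \<mu>))
        - (lam 1 + lam K) / 2 * L2inner (trig_diffop (real 1 * pi) cU (2 * n) \<mu>) (trig_diffop (real K * pi) cV (2 * n) \<mu>)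
      = integral {0..1} (\<lambda>x. harmonic (real 1 * pi) (cU (2 * n)) x * harmonic (real K * pi) (cV (2 * n)) x
          * nth_deriv (Suc (2 * n)) \<mu> x ^ 2) + Q \<mu>"
    and "\<And>\<mu>. \<mu> \<in> test_fun \<Longrightarrow> \<bar>Q \<mu>\<bar> \<le> C * Hnorm_sq (2 * n) \<mu>"
    using energy_trig_diffop_principal_part[OF cU(1) cV(1)] by blast
  moreover have "AKp p K \<mu> = L2inner (\<lambda>x. ((deriv ^^ (2*p-1)) \<mu> x)^2 * phi 1 x) (phi K) + Q \<mu>"
    if "\<mu> \<in> test_fun" for \<mu>
    using AKp_eq_energy[OF assms(2) that, of K] energy[OF that] cU cV that
    unfolding N L2inner_def n_def[symmetric] cU(2) cV(2) harmonic_phi_coeff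
    by (simp add: nth_deriv_def mult_ac)
  ultimately show ?thesis unfolding N by blast
qed

end
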